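(* Let $N\ge2$, $d\ge1$, let $S\subset\mathbb{Z}_N^d$ be a nonempty Salem set at level $\Lambda_{\text{Salem}}>0$, and let $f:\mathbb{Z}_N^d\to\mathbb{C}$ be supported in $E\subset\mathbb{Z}_N^d$. Suppose $$|E|\cdot|S|^{3/4}<\frac12\,N^d\sqrt{\frac{1-\mathrm{dens}(S)}{\Lambda_{\text{Salem}}}},\qquad \mathrm{dens}(S)=N^{-d}|S|.$$ Then $f$ is uniquely determined by the values $\hat f(m)$, $m\notin S$, among signals with at most $|E|$ nonzero entries: if $g:\mathbb{Z}_N^d\to\mathbb{C}$ satisfies $|\{x:g(x)\ne0\}|\le|E|$ and $\hat g(m)=\hat f(m)$ for all $m\notin S$, then $g=f$.
   Context: $\chi(t)=e^{2\pi i t/N}$, $\hat f(m)=N^{-d}\sum_{x\in\mathbb{Z}_N^d}\chi(-x\cdot m)f(x)$. Sets are identified with indicator functions, so $\hat S(z)=N^{-d}\sum_{x\in S}\chi(-x\cdot z)$. A set $S\subset\mathbb{Z}_N^d$ is a Salem set at level $\Lambda_{\text{Salem}}$ if $|\hat S(z)|\le\Lambda_{\text{Salem}}N^{-d}|S|^{1/2}$ for all $z\ne0$. The set $S$ is the set of unobserved frequencies. *)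

theory Defs
  imports "HOL-Analysis.Analysis"
begin

text \<open>Points of Z_N^d are represented as functions nat => nat with
  coordinates x i < N for i < d and x i = 0 for i >= d.\<close>
definition ZNd :: "nat \<Rightarrow> nat \<Rightarrow> (nat \<Rightarrow> nat) set" where
  "ZNd N d = {x. (\<forall>i<d. x i < N) \<and> (\<forall>i\<ge>d. x i = 0)}"

definition dotp :: "nat \<Rightarrow> (nat \<Rightarrow> nat) \<Rightarrow> (nat \<Rightarrow> nat) \<Rightarrow> int" where
  "dotp d x m = (\<Sum>i<d. int (x i) * int (m i))"

definition chi :: "nat \<Rightarrow> int \<Rightarrow> complex" where
  "chi N t = exp (2 * pi * \<i> * of_int t / of_nat N)"

definition fourier :: "nat \<Rightarrow> nat \<Rightarrow> ((nat \<Rightarrow> nat) \<Rightarrow> complex) \<Rightarrow> (nat \<Rightarrow> nat) \<Rightarrow> complex" where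
  "fourier N d f m = (1 / of_nat N ^ d) * (\<Sum>x\<in>ZNd N d. chi N (- dotp d x m) * f x)"

definition indic :: "(nat \<Rightarrow> nat) set \<Rightarrow> (nat \<Rightarrow> nat) \<Rightarrow> complex" where
  "indic S x = (if x \<in> S then 1 else 0)"

definition salem :: "nat \<Rightarrow> nat \<Rightarrow> real \<Rightarrow> (nat \<Rightarrow> nat) set \<Rightarrow> bool" where
  "salem N d \<Lambda> S \<longleftrightarrow> S \<subseteq> ZNd N d \<and>
     (\<forall>z\<in>ZNd N d. z \<noteq> (\<lambda>_. 0) \<longrightarrow>
        cmod (fourier N d (indic S) z) \<le> \<Lambda> / real N ^ d * sqrt (real (card S)))"

definition dens :: "nat \<Rightarrow> nat \<Rightarrow> (nat \<Rightarrow> nat) set \<Rightarrow> real" where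
  "dens N d S = real (card S) / real N ^ d"

end

theory Submission imports Defs "HOL-Number_Theory.Cong" begin

text \<open>Put \<open>h = g - f\<close>. Its Fourier transform vanishes off \<open>S\<close>, so Fourier inversion expresses
  \<open>N^d h(x)\<close> as \<open>\<Sum>\<^sub>y h(y) K(x,y)\<close> with the kernel \<open>K(x,y) = \<Sum>\<^sub>m\<^sub>\<in>\<^sub>S \<chi>((x - y)\<cdot>m)\<close>.
  On the diagonal \<open>K = |S|\<close>; off it \<open>K\<close> is \<open>N^d\<close> times a Fourier coefficient of \<open>S\<close>, hence
  bounded by \<open>\<Lambda> |S|^(1/2)\<close>. Summing the two resulting pointwise bounds over the support \<open>F\<close>
  of \<open>h\<close> gives \<open>N^d \<le> |F| |S|\<close> and \<open>N^d - |S| \<le> |F| \<Lambda> |S|^(1/2)\<close>; their product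
  \<open>N^d (N^d - |S|) \<le> |F|^2 \<Lambda> |S|^(3/2)\<close> contradicts the hypothesis because \<open>|F| \<le> 2|E|\<close>.\<close>

lemma chi_add: "chi N (a + b) = chi N a * chi N b"
  unfolding chi_def by (simp add: distrib_left add_divide_distrib exp_add)

lemma chi_0 [simp]: "chi N 0 = 1"
  unfolding chi_def by simp

lemma norm_chi [simp]: "cmod (chi N t) = 1"
  unfolding chi_def by simp

lemma chi_multiple_of_modulus:
  assumes "N > 0" shows "chi N (int N * k) = 1"
proof -
  have "2 * pi * \<i> * of_int (int N * k) / of_nat N = (2 * of_int k * pi) * \<i>"
    using assms by (simp add: field_simps)
  then show ?thesis unfolding chi_def using exp_integer_2pi[of "of_int k"] by simp
qed

lemma chi_cong:
  assumes "N > 0" "[a = b] (mod int N)" shows "chi N a = chi N b"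
proof -
  obtain k where "a = b + int N * k"
    using assms(2) by (metis cong_iff_lin cong_sym)
  then show ?thesis using chi_add chi_multiple_of_modulus[OF assms(1)] by simp
qed

lemma chi_sum: "finite A \<Longrightarrow> chi N (sum f A) = (\<Prod>i\<in>A. chi N (f i))"
  by (induct A rule: finite_induct) (auto simp: chi_add)

lemma chi_mult_of_nat: "chi N (a * int k) = chi N a ^ k"
  by (induct k) (auto simp: distrib_left chi_add)

lemma sum_chi_geometric:
  assumes "N > 0" "\<bar>a\<bar> < int N"
  shows "(\<Sum>k<N. chi N (a * int k)) = (if a = 0 then of_nat N else 0)"
proof (cases "a = 0")
  case False
  have "chi N a \<noteq> 1"
  proof
    assume "chi N a = 1"
    then obtain n :: int where "Im (2 * pi * \<i> * of_int a / of_nat N) = of_int (2 * n) * pi"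
      unfolding chi_def exp_eq_1 by blast
    then have "real_of_int a = real_of_int n * real N"
      using assms(1) by (simp add: field_simps)
    then have "a = n * int N"
      by (metis of_int_eq_iff of_int_mult of_int_of_nat_eq)
    with False assms(2) show False
      by (simp add: abs_mult)
  qed
  moreover have "chi N a ^ N = 1"
    using chi_mult_of_nat[of N a N] chi_multiple_of_modulus[OF assms(1), of a]
    by (simp add: mult.commute)
  ultimately show ?thesis using False by (simp add: chi_mult_of_nat sum_gp_strict)
qed simp

lemma ZNd_0: "ZNd N 0 = {\<lambda>_. 0}"
  unfolding ZNd_def by auto

lemma ZNd_Suc: "ZNd N (Suc d) = (\<lambda>(m, k). m(d := k)) ` (ZNd N d \<times> {..<N})"
proof
  show "ZNd N (Suc d) \<subseteq> (\<lambda>(m, k). m(d := k)) ` (ZNd N d \<times> {..<N})"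
  proof
    fix x assume "x \<in> ZNd N (Suc d)"
    then have "(x(d := 0), x d) \<in> ZNd N d \<times> {..<N}"
      unfolding ZNd_def by auto
    moreover have "x = (\<lambda>(m, k). m(d := k)) (x(d := 0), x d)" by simp
    ultimately show "x \<in> (\<lambda>(m, k). m(d := k)) ` (ZNd N d \<times> {..<N})" by blast
  qed
qed (auto simp: ZNd_def less_Suc_eq)

lemma ZNd_eq_iff:
  assumes "x \<in> ZNd N d" "y \<in> ZNd N d"
  shows "x = y \<longleftrightarrow> (\<forall>i<d. x i = y i)"
proof
  assume "\<forall>i<d. x i = y i"
  show "x = y"
  proof
    fix i show "x i = y i"
      using assms \<open>\<forall>i<d. x i = y i\<close> unfolding ZNd_def by (cases "i < d") auto
  qed
qed simp

lemma inj_on_ZNd_Suc: "inj_on (\<lambda>(m, k). m(d := k)) (ZNd N d \<times> {..<N})"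
proof (rule inj_onI, clarify)
  fix m k m' k' assume m: "m \<in> ZNd N d" "m' \<in> ZNd N d" and eq: "m(d := k) = m'(d := k')"
  have "m i = m' i" if "i < d" for i
    using fun_cong[OF eq, of i] that by simp
  then show "m = m' \<and> k = k'"
    using fun_cong[OF eq, of d] ZNd_eq_iff[OF m] by simp
qed

lemma finite_ZNd [simp]: "finite (ZNd N d)"
  by (induct d) (auto simp: ZNd_0 ZNd_Suc)

lemma sum_prod_ZNd:
  "(\<Sum>m\<in>ZNd N d. \<Prod>i<d. (\<phi> i (m i) :: 'a :: comm_semiring_1)) = (\<Prod>i<d. \<Sum>k<N. \<phi> i k)"
proof (induct d)
  case (Suc d)
  have "(\<Sum>m\<in>ZNd N (Suc d). \<Prod>i<Suc d. \<phi> i (m i))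
      = (\<Sum>p\<in>ZNd N d \<times> {..<N}. \<Prod>i<Suc d. \<phi> i (((\<lambda>(m, k). m(d := k)) p) i))"
    unfolding ZNd_Suc by (rule sum.reindex[OF inj_on_ZNd_Suc, unfolded comp_def])
  also have "\<dots> = (\<Sum>p\<in>ZNd N d \<times> {..<N}. (\<Prod>i<d. \<phi> i (fst p i)) * \<phi> d (snd p))"
    by (rule sum.cong) (auto intro!: prod.cong)
  also have "\<dots> = (\<Sum>m\<in>ZNd N d. \<Sum>k<N. (\<Prod>i<d. \<phi> i (m i)) * \<phi> d k)"
    unfolding sum.cartesian_product by (simp add: case_prod_beta)
  also have "\<dots> = (\<Sum>m\<in>ZNd N d. \<Prod>i<d. \<phi> i (m i)) * (\<Sum>k<N. \<phi> d k)"
    by (rule sum_product[symmetric])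
  finally show ?case using Suc by simp
qed (simp add: ZNd_0)

lemma sum_chi_dotp_diff:
  assumes "N > 0" "x \<in> ZNd N d" "y \<in> ZNd N d"
  shows "(\<Sum>m\<in>ZNd N d. chi N (dotp d x m - dotp d y m)) = (if x = y then of_nat N ^ d else 0)"
proof -
  have "(\<Sum>m\<in>ZNd N d. chi N (dotp d x m - dotp d y m))
      = (\<Sum>m\<in>ZNd N d. \<Prod>i<d. chi N ((int (x i) - int (y i)) * int (m i)))"
    unfolding dotp_def by (simp add: chi_sum sum_subtractf[symmetric] left_diff_distrib)
  also have "\<dots> = (\<Prod>i<d. \<Sum>k<N. chi N ((int (x i) - int (y i)) * int k))"
    by (rule sum_prod_ZNd)
  also have "\<dots> = (\<Prod>i<d. if x i = y i then of_nat N else 0)"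
  proof (rule prod.cong)
    fix i assume "i \<in> {..<d}"
    then have "x i < N" "y i < N"
      using assms unfolding ZNd_def by auto
    then have "\<bar>int (x i) - int (y i)\<bar> < int N" by linarith
    then show "(\<Sum>k<N. chi N ((int (x i) - int (y i)) * int k)) = (if x i = y i then of_nat N else 0)"
      using sum_chi_geometric[OF assms(1)] by simp
  qed simp
  also have "\<dots> = (if x = y then of_nat N ^ d else 0)"
    using ZNd_eq_iff[OF assms(2,3)] by auto
  finally show ?thesis .
qed

text \<open>The difference \<open>y - x\<close> in \<open>\<int>\<^sub>N\<^sup>d\<close>, which the encoding of points does not provide directly.\<close>

lemma ZNd_difference:
  assumes "N > 0" "x \<in> ZNd N d" "y \<in> ZNd N d" "x \<noteq> y"
  obtains z where "z \<in> ZNd N d" "z \<noteq> (\<lambda>_. 0)"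
    and "\<And>m. chi N (- dotp d m z) = chi N (dotp d x m - dotp d y m)"
proof
  define z where "z i = (if i < d then (y i + N - x i) mod N else 0)" for i
  show "z \<in> ZNd N d"
    unfolding z_def ZNd_def using assms(1) by auto
  have z_cong: "[int (z i) = int (y i) - int (x i)] (mod int N)" if "i < d" for i
  proof -
    have "x i < N" using assms(2) that unfolding ZNd_def by auto
    then have "int (z i) = (int (y i) - int (x i) + int N) mod int N"
      using that by (simp add: z_def of_nat_mod algebra_simps)
    then show ?thesis
      by (simp add: cong_def)
  qed
  obtain i where i: "i < d" "x i \<noteq> y i"
    using ZNd_eq_iff[OF assms(2,3)] assms(4) by blast
  then have "x i < N" "y i < N"
    using assms(2,3) unfolding ZNd_def by auto
  then have "\<bar>int (y i) - int (x i)\<bar> < int N" by linarith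
  with i(2) have "\<not> int N dvd int (y i) - int (x i)"
    using dvd_imp_le_int[of "int (y i) - int (x i)" "int N"] by auto
  have "z i \<noteq> 0"
  proof
    assume "z i = 0"
    then have "[0 = int (y i) - int (x i)] (mod int N)" using z_cong[OF i(1)] by simp
    with \<open>\<not> int N dvd int (y i) - int (x i)\<close> show False by (meson cong_0_iff cong_sym)
  qed
  then show "z \<noteq> (\<lambda>_. 0)" by auto
  fix m
  show "chi N (- dotp d m z) = chi N (dotp d x m - dotp d y m)"
  proof (rule chi_cong[OF assms(1)])
    have "[dotp d m z = (\<Sum>i<d. int (m i) * (int (y i) - int (x i)))] (mod int N)"
      unfolding dotp_def by (intro cong_sum cong_mult cong_refl) (auto intro: z_cong)
    moreover have "(\<Sum>i<d. int (m i) * (int (y i) - int (x i))) = dotp d y m - dotp d x m"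
      unfolding dotp_def by (simp add: sum_subtractf[symmetric] algebra_simps)
    ultimately show "[- dotp d m z = dotp d x m - dotp d y m] (mod int N)"
      by (metis cong_minus_minus_iff minus_diff_eq)
  qed
qed

definition kernel :: "nat \<Rightarrow> nat \<Rightarrow> (nat \<Rightarrow> nat) set \<Rightarrow> (nat \<Rightarrow> nat) \<Rightarrow> (nat \<Rightarrow> nat) \<Rightarrow> complex" where
  "kernel N d S x y = (\<Sum>m\<in>S. chi N (dotp d x m - dotp d y m))"

lemma kernel_diag: "kernel N d S x x = of_nat (card S)"
  unfolding kernel_def by simp

lemma norm_kernel_le_card: "cmod (kernel N d S x y) \<le> real (card S)"
  unfolding kernel_def using norm_sum[of "\<lambda>m. chi N (dotp d x m - dotp d y m)" S] by simp

lemma norm_kernel_le_salem: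
  assumes "N > 0" "salem N d \<Lambda> S" "x \<in> ZNd N d" "y \<in> ZNd N d" "x \<noteq> y"
  shows "cmod (kernel N d S x y) \<le> \<Lambda> * sqrt (real (card S))"
proof -
  obtain z where z: "z \<in> ZNd N d" "z \<noteq> (\<lambda>_. 0)"
    and chi_z: "\<And>m. chi N (- dotp d m z) = chi N (dotp d x m - dotp d y m)"
    using ZNd_difference[OF assms(1,3-5)] by blast
  have "S \<subseteq> ZNd N d" using assms(2) unfolding salem_def by auto
  moreover have "indic S = (\<lambda>m. of_bool (m \<in> S))" by (auto simp: indic_def)
  ultimately have "kernel N d S x y = of_nat N ^ d * fourier N d (indic S) z"
    using assms(1) unfolding fourier_def kernel_def by (simp add: Int_absorb1 chi_z field_simps)
  then have "cmod (kernel N d S x y) = real N ^ d * cmod (fourier N d (indic S) z)"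
    by (simp add: norm_mult norm_power)
  moreover have "cmod (fourier N d (indic S) z) \<le> \<Lambda> / real N ^ d * sqrt (real (card S))"
    using assms(2) z unfolding salem_def by blast
  ultimately show ?thesis
    using assms(1) by (simp add: norm_divide norm_power field_simps)
qed

lemma fourier_inversion_kernel:
  assumes "N > 0" "S \<subseteq> ZNd N d" "\<forall>m\<in>ZNd N d - S. fourier N d h m = 0" "x \<in> ZNd N d"
  shows "of_nat N ^ d * h x = (\<Sum>y\<in>ZNd N d. h y * kernel N d S x y)"
proof -
  define T where "T m = (\<Sum>y\<in>ZNd N d. chi N (- dotp d y m) * h y)" for m
  have chi_merge: "chi N (dotp d x m) * (chi N (- dotp d y m) * h y) = chi N (dotp d x m - dotp d y m) * h y"
    for m y by (simp add: chi_add[symmetric])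
  have T_expand: "chi N (dotp d x m) * T m = (\<Sum>y\<in>ZNd N d. chi N (dotp d x m - dotp d y m) * h y)" for m
    unfolding T_def sum_distrib_left chi_merge ..
  have "(\<Sum>y\<in>ZNd N d. h y * (\<Sum>m\<in>ZNd N d. chi N (dotp d x m - dotp d y m)))
      = (\<Sum>y\<in>ZNd N d. if y = x then h x * of_nat N ^ d else 0)"
    by (rule sum.cong) (auto simp: sum_chi_dotp_diff[OF assms(1,4)])
  then have "of_nat N ^ d * h x
      = (\<Sum>y\<in>ZNd N d. h y * (\<Sum>m\<in>ZNd N d. chi N (dotp d x m - dotp d y m)))"
    using assms(4) by (simp add: mult.commute)
  also have "\<dots> = (\<Sum>m\<in>ZNd N d. \<Sum>y\<in>ZNd N d. chi N (dotp d x m - dotp d y m) * h y)"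
    by (subst sum.swap) (simp add: sum_distrib_left mult.commute)
  also have "\<dots> = (\<Sum>m\<in>ZNd N d. chi N (dotp d x m) * T m)"
    by (simp add: T_expand)
  also have "\<dots> = (\<Sum>m\<in>S. chi N (dotp d x m) * T m)"
    by (rule sum.mono_neutral_right[OF finite_ZNd assms(2)])
      (use assms(1,3) in \<open>auto simp: fourier_def T_def\<close>)
  also have "\<dots> = (\<Sum>m\<in>S. \<Sum>y\<in>ZNd N d. chi N (dotp d x m - dotp d y m) * h y)"
    by (simp add: T_expand)
  also have "\<dots> = (\<Sum>y\<in>ZNd N d. h y * kernel N d S x y)"
    unfolding kernel_def by (subst sum.swap) (simp add: sum_distrib_left mult.commute)
  finally show ?thesis .
qed

lemma norm_fourier_sparse_le_card:
  assumes "N > 0" "S \<subseteq> ZNd N d" "\<forall>m\<in>ZNd N d - S. fourier N d h m = 0" "x \<in> ZNd N d"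
  shows "real N ^ d * cmod (h x) \<le> real (card S) * (\<Sum>y\<in>ZNd N d. cmod (h y))"
proof -
  have "real N ^ d * cmod (h x) = cmod (\<Sum>y\<in>ZNd N d. h y * kernel N d S x y)"
    by (simp flip: fourier_inversion_kernel[OF assms] add: norm_mult norm_power)
  also have "\<dots> \<le> (\<Sum>y\<in>ZNd N d. cmod (h y) * real (card S))"
    using norm_kernel_le_card
    by (intro order.trans[OF norm_sum] sum_mono) (simp add: norm_mult mult_left_mono)
  finally show ?thesis by (simp add: sum_distrib_left mult.commute)
qed

lemma norm_fourier_sparse_le_salem:
  assumes "N > 0" "salem N d \<Lambda> S" "\<Lambda> \<ge> 0"
    and "\<forall>m\<in>ZNd N d - S. fourier N d h m = 0" "x \<in> ZNd N d"
  shows "(real N ^ d - real (card S)) * cmod (h x)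
    \<le> \<Lambda> * sqrt (real (card S)) * (\<Sum>y\<in>ZNd N d. cmod (h y))"
proof -
  have S: "S \<subseteq> ZNd N d" using assms(2) unfolding salem_def by auto
  have "of_real (real N ^ d - real (card S)) * h x = (\<Sum>y\<in>ZNd N d - {x}. h y * kernel N d S x y)"
    using fourier_inversion_kernel[OF assms(1) S assms(4,5)] assms(5)
    by (simp add: sum.remove kernel_diag algebra_simps)
  then have "(real N ^ d - real (card S)) * cmod (h x)
      \<le> cmod (\<Sum>y\<in>ZNd N d - {x}. h y * kernel N d S x y)"
    by (metis abs_ge_self mult_right_mono norm_ge_zero norm_mult norm_of_real)
  also have "\<dots> \<le> (\<Sum>y\<in>ZNd N d - {x}. cmod (h y) * (\<Lambda> * sqrt (real (card S))))"
    using norm_kernel_le_salem[OF assms(1,2,5)]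
    by (intro order.trans[OF norm_sum] sum_mono) (auto simp: norm_mult intro!: mult_left_mono)
  also have "\<dots> \<le> (\<Sum>y\<in>ZNd N d. cmod (h y) * (\<Lambda> * sqrt (real (card S))))"
    using assms(3) by (intro sum_mono2) auto
  finally show ?thesis by (simp add: sum_distrib_left mult.commute)
qed

lemma le_card_mult_of_pointwise_bound:
  fixes w :: "'a \<Rightarrow> real"
  assumes "finite F" "(\<Sum>y\<in>F. w y) > 0" "\<And>x. x \<in> F \<Longrightarrow> a * w x \<le> b * (\<Sum>y\<in>F. w y)"
  shows "a \<le> real (card F) * b"
proof -
  have "a * (\<Sum>y\<in>F. w y) = (\<Sum>x\<in>F. a * w x)"
    by (simp add: sum_distrib_left)
  also have "\<dots> \<le> (\<Sum>x\<in>F. b * (\<Sum>y\<in>F. w y))"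
    using assms(3) by (rule sum_mono)
  finally show ?thesis using assms(2) by simp
qed

lemma uncertainty_principle:
  assumes "N > 0" "salem N d \<Lambda> S" "\<Lambda> \<ge> 0"
    and "\<forall>m\<in>ZNd N d - S. fourier N d h m = 0" "x0 \<in> ZNd N d" "h x0 \<noteq> 0"
  defines "n \<equiv> real N ^ d" and "s \<equiv> real (card S)" and "F \<equiv> {x\<in>ZNd N d. h x \<noteq> 0}"
  shows "n * (n - s) \<le> real (card F) ^ 2 * \<Lambda> * s * sqrt s"
proof -
  have S: "S \<subseteq> ZNd N d" using assms(2) unfolding salem_def by auto
  have F: "finite F" "F \<subseteq> ZNd N d" unfolding F_def by auto
  have L_F: "(\<Sum>y\<in>ZNd N d. cmod (h y)) = (\<Sum>y\<in>F. cmod (h y))"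
    by (rule sum.mono_neutral_right[OF finite_ZNd F(2)]) (auto simp: F_def)
  have L_pos: "(\<Sum>y\<in>F. cmod (h y)) > 0"
    using F assms(5,6) by (intro sum_pos2[of _ x0]) (auto simp: F_def)
  have n_le: "n \<le> real (card F) * s"
    using norm_fourier_sparse_le_card[OF assms(1) S assms(4)] F(2)
    by (intro le_card_mult_of_pointwise_bound[OF F(1) L_pos]) (auto simp: n_def s_def L_F)
  have diff_le: "n - s \<le> real (card F) * (\<Lambda> * sqrt s)"
    using norm_fourier_sparse_le_salem[OF assms(1-4)] F(2)
    by (intro le_card_mult_of_pointwise_bound[OF F(1) L_pos]) (auto simp: n_def s_def L_F)
  have "n > 0" "s \<ge> 0" unfolding n_def s_def using assms(1) by auto
  have "n * (n - s) \<le> (real (card F) * s) * (real (card F) * (\<Lambda> * sqrt s))"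
  proof (cases "s \<le> n")
    case True
    then show ?thesis using n_le diff_le \<open>n > 0\<close> by (intro mult_mono) auto
  next
    case False
    then have "n * (n - s) \<le> 0" using \<open>n > 0\<close> by (simp add: mult_nonneg_nonpos)
    also have "0 \<le> (real (card F) * s) * (real (card F) * (\<Lambda> * sqrt s))"
      using assms(3) \<open>s \<ge> 0\<close> by simp
    finally show ?thesis .
  qed
  then show ?thesis by (simp add: power2_eq_square mult_ac)
qed

lemma sparsity_hypothesis_squared:
  fixes n s e \<Lambda> :: real
  assumes "n > 0" "s > 0" "\<Lambda> > 0" "e \<ge> 0"
    and "e * s powr (3/4) < 1/2 * n * sqrt ((1 - s / n) / \<Lambda>)"
  shows "(2 * e)\<^sup>2 * \<Lambda> * s * sqrt s < n * (n - s)"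
proof -
  have lhs_nonneg: "0 \<le> e * s powr (3/4)" using assms(4) by simp
  then have "0 < 1/2 * n * sqrt ((1 - s / n) / \<Lambda>)"
    using assms(5) by linarith
  then have "sqrt ((1 - s / n) / \<Lambda>) > 0"
    using assms(1) by (simp add: zero_less_mult_iff)
  then have q: "(1 - s / n) / \<Lambda> > 0" by simp
  have "s powr (3/4) * s powr (3/4) = s powr (3/2)"
    by (simp add: powr_add[symmetric])
  also have "\<dots> = s * sqrt s"
    using assms(2) powr_add[of s 1 "1/2"] by (simp add: powr_half_sqrt)
  finally have "s powr (3/4) * s powr (3/4) = s * sqrt s" .
  then have "(2 * e)\<^sup>2 * \<Lambda> * s * sqrt s = 4 * \<Lambda> * (e * s powr (3/4))\<^sup>2"
    by (simp add: power2_eq_square)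
  also have "\<dots> < 4 * \<Lambda> * (1/2 * n * sqrt ((1 - s / n) / \<Lambda>))\<^sup>2"
    using assms(3,5) lhs_nonneg by (intro mult_strict_left_mono power_strict_mono) auto
  also have "\<dots> = \<Lambda> * n\<^sup>2 * ((1 - s / n) / \<Lambda>)"
    using real_sqrt_pow2[OF less_imp_le[OF q]] by (simp add: power_mult_distrib power_divide)
  also have "\<dots> = n * (n - s)"
    using assms(1,3) by (simp add: field_simps power2_eq_square)
  finally show ?thesis .
qed

theorem theorem4:
  fixes N d :: nat and \<Lambda> :: real and S E :: "(nat \<Rightarrow> nat) set"
    and f :: "(nat \<Rightarrow> nat) \<Rightarrow> complex"
  assumes "N \<ge> 2" and "d \<ge> 1"
    and "S \<noteq> {}" and "\<Lambda> > 0" and "salem N d \<Lambda> S"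
    and "E \<subseteq> ZNd N d"
    and "\<forall>x\<in>ZNd N d. x \<notin> E \<longrightarrow> f x = 0"
    and "real (card E) * real (card S) powr (3/4)
           < 1/2 * real N ^ d * sqrt ((1 - dens N d S) / \<Lambda>)"
  shows "\<forall>g :: (nat \<Rightarrow> nat) \<Rightarrow> complex.
           card {x\<in>ZNd N d. g x \<noteq> 0} \<le> card E \<and>
           (\<forall>m\<in>ZNd N d - S. fourier N d g m = fourier N d f m)
           \<longrightarrow> (\<forall>x\<in>ZNd N d. g x = f x)"
proof (intro allI impI ballI, rule ccontr)
  fix g :: "(nat \<Rightarrow> nat) \<Rightarrow> complex" and x0
  assume g: "card {x\<in>ZNd N d. g x \<noteq> 0} \<le> card E \<and>
      (\<forall>m\<in>ZNd N d - S. fourier N d g m = fourier N d f m)"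
    and x0: "x0 \<in> ZNd N d" "g x0 \<noteq> f x0"
  define h where "h x = g x - f x" for x
  define F where "F = {x\<in>ZNd N d. h x \<noteq> 0}"
  have "\<forall>m\<in>ZNd N d - S. fourier N d h m = 0"
    using g unfolding fourier_def h_def by (simp add: right_diff_distrib sum_subtractf)
  moreover have "h x0 \<noteq> 0" using x0(2) by (simp add: h_def)
  ultimately have "real N ^ d * (real N ^ d - card S) \<le> real (card F) ^ 2 * \<Lambda> * card S * sqrt (card S)"
    using uncertainty_principle[OF _ assms(5) _ _ x0(1)] assms(1,4) unfolding F_def by simp
  also have "\<dots> \<le> (2 * real (card E)) ^ 2 * \<Lambda> * card S * sqrt (card S)"
  proof -
    have "card F \<le> card {x\<in>ZNd N d. g x \<noteq> 0} + card E"
      using assms(6,7) finite_subset[OF assms(6)] unfolding F_def h_def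
      by (intro order.trans[OF card_mono card_Un_le]) auto
    then have "real (card F) \<le> 2 * real (card E)" using g by linarith
    then show ?thesis using assms(4) by (intro mult_right_mono power_mono) auto
  qed
  also have "\<dots> < real N ^ d * (real N ^ d - card S)"
  proof (rule sparsity_hypothesis_squared)
    have "finite S" using assms(5) finite_subset[of S "ZNd N d"] by (simp add: salem_def)
    then show "real (card S) > 0" using assms(3) by (simp add: card_gt_0_iff)
  qed (use assms(1,4,8) in \<open>auto simp: dens_def\<close>)
  finally show False by simp
qed

end
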